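(* Let $\kappa$ be a gravitational lens satisfying the conditions in the context, and let $\alpha(x)=\frac{2}{x}\int_0^x\kappa(t)\,t\,dt$ for $x>0$ be its normalized deflection angle. An Einstein ring is a radius $x_E>0$ with $\alpha(x_E)=x_E$. Then at least one Einstein ring exists if and only if $\kappa(0)>1$ (where $\kappa(0)=+\infty$ for singular lenses).
   Context: A gravitational lens (in a single lens plane) is given by a normalized surface density $\kappa$ on the plane $\mathbb{R}^2$ satisfying: (i) Continuity: $\kappa:\mathbb{R}^2\to[0,\infty)$ is continuous, except possibly at the origin for singular lenses. (ii) Circular symmetry: $\kappa$ depends only on the radius $x=\|\mathbf{x}\|$; write $\kappa=\kappa(x)$. (iii) Finiteness: $\kappa(x)<\infty$ for $x>0$; $\kappa(0)=1/C_1$ for a constant $C_1\ge 0$ (so $\kappa(0)=+\infty$ when $C_1=0$); and $\lim_{x\to\infty}\kappa(x)\,x=C_2$ for a constant $0\le C_2<\infty$. (iv) Self-gravitation: $\kappa(x)<\bar\kappa(x)$ for $x>0$, where $\bar\kappa(x)=\frac{2}{x^2}\int_0^x\kappa(t)\,t\,dt$. The lens is called singular if and only if $C_1=0$, and non-singular otherwise. The deflection angle $\alpha$ is the radial derivative of the lensing potential $f$ solving $\Delta f=2\kappa$ (with deflection vanishing as small as possible at infinity), which for a circularly symmetric lens is $\alpha(x)=\frac{2}{x}\int_0^x\kappa(t)\,t\,dt$. *)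

theory Defs
  imports "HOL-Analysis.Analysis"
begin

text \<open>A circularly symmetric lens is represented by its radial profile
  kappa :: real => real, of which only the values on [0, infinity) matter.\<close>

definition mean_density :: "(real \<Rightarrow> real) \<Rightarrow> real \<Rightarrow> real" where
  "mean_density \<kappa> x = 2 / x\<^sup>2 * integral {0..x} (\<lambda>t. \<kappa> t * t)"

definition deflection :: "(real \<Rightarrow> real) \<Rightarrow> real \<Rightarrow> real" where
  "deflection \<kappa> x = 2 / x * integral {0..x} (\<lambda>t. \<kappa> t * t)"

text \<open>For C1 = 0 (singular lens)
  kappa(0) = +infinity is encoded as kappa(x) tending to +infinity as x -> 0+;
  for C1 > 0 kappa(0) = 1/C1 and kappa is continuous at the origin.\<close>
definition grav_lens :: "(real \<Rightarrow> real) \<Rightarrow> real \<Rightarrow> real \<Rightarrow> bool" where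
  "grav_lens \<kappa> C1 C2 \<longleftrightarrow>
     continuous_on {0<..} \<kappa> \<and>
     (\<forall>x>0. 0 \<le> \<kappa> x) \<and>
     0 \<le> C1 \<and>
     (C1 > 0 \<longrightarrow> \<kappa> 0 = 1 / C1 \<and> continuous (at_right 0) \<kappa>) \<and>
     (C1 = 0 \<longrightarrow> filterlim \<kappa> at_top (at_right 0)) \<and>
     0 \<le> C2 \<and> ((\<lambda>x. \<kappa> x * x) \<longlongrightarrow> C2) at_top \<and>
     (\<forall>x>0. (\<lambda>t. \<kappa> t * t) integrable_on {0..x}) \<and>
     (\<forall>x>0. \<kappa> x < mean_density \<kappa> x)"

definition singular_lens :: "real \<Rightarrow> bool" where
  "singular_lens C1 \<longleftrightarrow> C1 = 0"

end

theory Submission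
  imports Defs "HOL-Real_Asymp.Real_Asymp"
begin

text \<open>An Einstein ring is a radius where the mean density inside it equals 1. Differentiating
  gives \<open>m' x = 2/x * (\<kappa> x - m x)\<close>, so self-gravitation makes the mean density \<open>m\<close>
  strictly decreasing on \<open>(0, \<infinity>)\<close>. Its limit at \<open>\<infinity>\<close> is 0 because \<open>\<kappa> x * x\<close> stays bounded,
  and near 0 it is squeezed by the values of \<open>\<kappa>\<close> there: if \<open>\<kappa>(0) > 1\<close> (or \<open>\<kappa>(0) = \<infinity>\<close>) then
  \<open>m > \<kappa> > 1\<close> at small radii and the intermediate value theorem yields a ring; if \<open>\<kappa>(0) \<le> 1\<close>
  then \<open>m < \<kappa>(0) \<le> 1\<close> everywhere.\<close>

lemma integral_upto_has_real_derivative: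
  fixes f :: "real \<Rightarrow> real"
  assumes "isCont f x" "a < x" "x < b" "f integrable_on {a..b}"
  shows "((\<lambda>y. integral {a..y} f) has_real_derivative f x) (at x)"
proof -
  have "((\<lambda>y. integral {a..y} f) has_vector_derivative f x) (at x within ({a..b} - {}))"
    using assms by (intro integral_has_vector_derivative_continuous_at)
      (auto intro: continuous_at_imp_continuous_within)
  moreover have "at x within ({a..b} - {}) = at x"
    using assms by (intro at_within_interior) auto
  ultimately show ?thesis
    by (simp add: has_real_derivative_iff_has_vector_derivative)
qed

lemma deflection_eq_mult_mean_density: "deflection \<kappa> x = x * mean_density \<kappa> x"
  by (cases "x = 0") (simp_all add: deflection_def mean_density_def power2_eq_square)

lemma mean_density_has_real_derivative:
  assumes "isCont \<kappa> x" "0 < x" "x < b" "(\<lambda>t. \<kappa> t * t) integrable_on {0..b}"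
  shows "(mean_density \<kappa> has_real_derivative 2 / x * (\<kappa> x - mean_density \<kappa> x)) (at x)"
proof -
  define F where "F = (\<lambda>y. integral {0..y} (\<lambda>t. \<kappa> t * t))"
  have dF: "(F has_real_derivative \<kappa> x * x) (at x)"
    unfolding F_def using assms
    by (intro integral_upto_has_real_derivative) (auto intro!: continuous_intros)
  have d2: "((\<lambda>y. 2 / y\<^sup>2) has_real_derivative - 4 / x ^ 3) (at x)"
    using \<open>0 < x\<close>
    by (auto intro!: derivative_eq_intros simp: field_simps power2_eq_square power3_eq_cube)
  have "((\<lambda>y. 2 / y\<^sup>2 * F y) has_real_derivative
      - 4 / x ^ 3 * F x + 2 / x\<^sup>2 * (\<kappa> x * x)) (at x)"
    by (rule DERIV_cong[OF DERIV_mult[OF d2 dF]]) (simp add: algebra_simps)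
  moreover have "- 4 / x ^ 3 * F x + 2 / x\<^sup>2 * (\<kappa> x * x) = 2 / x * (\<kappa> x - 2 / x\<^sup>2 * F x)"
    using \<open>0 < x\<close> by (simp add: field_simps power2_eq_square power3_eq_cube)
  ultimately show ?thesis
    unfolding F_def mean_density_def[abs_def] by simp
qed

lemma grav_lens_mean_density_has_real_derivative:
  assumes "grav_lens \<kappa> C1 C2" "0 < x"
  shows "(mean_density \<kappa> has_real_derivative 2 / x * (\<kappa> x - mean_density \<kappa> x)) (at x)"
proof (rule mean_density_has_real_derivative)
  show "isCont \<kappa> x"
    using assms continuous_on_eq_continuous_at[OF open_greaterThan, of 0 \<kappa>]
    unfolding grav_lens_def by auto
  show "(\<lambda>t. \<kappa> t * t) integrable_on {0..2 * x}"
    using assms unfolding grav_lens_def by simp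
qed (use assms in auto)

lemma mean_density_strict_decreasing:
  assumes "grav_lens \<kappa> C1 C2" "0 < a" "a < b"
  shows "mean_density \<kappa> b < mean_density \<kappa> a"
proof (rule DERIV_neg_imp_decreasing[OF \<open>a < b\<close>])
  fix x assume "a \<le> x"
  with assms have "0 < x" "\<kappa> x < mean_density \<kappa> x"
    unfolding grav_lens_def by auto
  then have "2 / x * (\<kappa> x - mean_density \<kappa> x) < 0"
    by (intro mult_pos_neg) simp_all
  then show "\<exists>y. (mean_density \<kappa> has_real_derivative y) (at x) \<and> y < 0"
    using grav_lens_mean_density_has_real_derivative[OF assms(1) \<open>0 < x\<close>] by blast
qed

lemma continuous_on_mean_density:
  assumes "grav_lens \<kappa> C1 C2" "0 < a"
  shows "continuous_on {a..b} (mean_density \<kappa>)"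
  using assms DERIV_isCont[OF grav_lens_mean_density_has_real_derivative]
  by (intro continuous_at_imp_continuous_on) auto

lemma mean_density_le:
  assumes "0 < x" "(\<lambda>t. \<kappa> t * t) integrable_on {0..x}" "\<And>t. 0 < t \<Longrightarrow> t \<le> x \<Longrightarrow> \<kappa> t \<le> c"
  shows "mean_density \<kappa> x \<le> c"
proof -
  have "((\<lambda>t. c * t) has_integral (\<lambda>t. c * t\<^sup>2 / 2) x - (\<lambda>t. c * t\<^sup>2 / 2) 0) {0..x}"
    using \<open>0 < x\<close> by (intro fundamental_theorem_of_calculus) (auto intro!: derivative_eq_intros
        simp: has_real_derivative_iff_has_vector_derivative[symmetric])
  then have lin: "((\<lambda>t. c * t) has_integral c * x\<^sup>2 / 2) {0..x}"
    by simp
  have "integral {0..x} (\<lambda>t. \<kappa> t * t) \<le> c * x\<^sup>2 / 2"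
  proof (rule has_integral_le[OF integrable_integral[OF assms(2)] lin])
    fix t assume "t \<in> {0..x}"
    then show "\<kappa> t * t \<le> c * t"
      using assms(3)[of t] by (cases "t = 0") (auto intro: mult_right_mono)
  qed
  then have "mean_density \<kappa> x \<le> 2 / x\<^sup>2 * (c * x\<^sup>2 / 2)"
    unfolding mean_density_def by (intro mult_left_mono) auto
  then show ?thesis
    using \<open>0 < x\<close> by simp
qed

text \<open>If \<open>\<kappa>\<close> has a limit \<open>L\<close> at the centre, the mean density stays below \<open>L\<close>: otherwise some
  \<open>m x\<^sub>1\<close> exceeds \<open>L\<close>, \<open>\<kappa> < m x\<^sub>1\<close> near 0 forces \<open>m \<le> m x\<^sub>1\<close> there, contradicting strict decrease.\<close>

lemma mean_density_less_limit_at_centre: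
  assumes lens: "grav_lens \<kappa> C1 C2" and lim: "(\<kappa> \<longlongrightarrow> L) (at_right 0)" and "0 < x"
  shows "mean_density \<kappa> x < L"
proof (rule ccontr)
  assume "\<not> mean_density \<kappa> x < L"
  define x1 where "x1 = x / 2"
  have x1: "0 < x1" "x1 < x"
    using \<open>0 < x\<close> by (auto simp: x1_def)
  have "L < mean_density \<kappa> x1"
    using mean_density_strict_decreasing[OF lens x1] \<open>\<not> mean_density \<kappa> x < L\<close> by linarith
  then have "eventually (\<lambda>t. \<kappa> t < mean_density \<kappa> x1) (at_right 0)"
    using order_tendstoD(2)[OF lim] by blast
  then obtain d where d: "0 < d" "\<And>t. 0 < t \<Longrightarrow> t < d \<Longrightarrow> \<kappa> t < mean_density \<kappa> x1"
    by (auto simp: eventually_at_right_field)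
  define y where "y = min d x1 / 2"
  have y: "0 < y" "y < d" "y < x1"
    using d x1 by (auto simp: y_def)
  have "mean_density \<kappa> y \<le> mean_density \<kappa> x1"
  proof (rule mean_density_le)
    show "(\<lambda>t. \<kappa> t * t) integrable_on {0..y}"
      using lens y unfolding grav_lens_def by simp
  qed (use d y in \<open>auto intro: less_imp_le\<close>)
  with mean_density_strict_decreasing[OF lens y(1,3)] show False
    by simp
qed

lemma mean_density_tendsto_zero:
  assumes nonneg: "\<And>x. 0 < x \<Longrightarrow> 0 \<le> \<kappa> x"
    and lim: "((\<lambda>x. \<kappa> x * x) \<longlongrightarrow> C2) at_top"
    and int: "\<And>x. 0 < x \<Longrightarrow> (\<lambda>t. \<kappa> t * t) integrable_on {0..x}"
  shows "(mean_density \<kappa> \<longlongrightarrow> 0) at_top"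
proof -
  define F where "F = (\<lambda>y. integral {0..y} (\<lambda>t. \<kappa> t * t))"
  define B where "B = C2 + 1"
  obtain T where T: "\<And>t. T \<le> t \<Longrightarrow> \<kappa> t * t < B"
    using order_tendstoD(2)[OF lim, of B] by (auto simp: B_def eventually_at_top_linorder)
  define T' where "T' = max T 1"
  define A where "A = \<bar>F T'\<bar>"
  have upper: "mean_density \<kappa> x \<le> 2 * A / x\<^sup>2 + 2 * B / x" if "T' \<le> x" for x
  proof -
    have "0 < T'"
      by (simp add: T'_def)
    then have intx: "(\<lambda>t. \<kappa> t * t) integrable_on {0..x}"
      using int \<open>T' \<le> x\<close> by simp
    have "integral {T'..x} (\<lambda>t. \<kappa> t * t) \<le> integral {T'..x} (\<lambda>t. B)"
      using \<open>0 < T'\<close> T by (intro integral_le integrable_subinterval_real[OF intx])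
        (auto simp: T'_def intro: less_imp_le)
    also have "\<dots> \<le> B * x"
    proof -
      have "0 \<le> \<kappa> T' * T'"
        using \<open>0 < T'\<close> nonneg[of T'] by simp
      then have "0 \<le> T' * B"
        using \<open>0 < T'\<close> T[of T'] by (simp add: T'_def)
      then show ?thesis
        using \<open>T' \<le> x\<close> by (simp add: algebra_simps)
    qed
    moreover have "F x = F T' + integral {T'..x} (\<lambda>t. \<kappa> t * t)"
      using Henstock_Kurzweil_Integration.integral_combine[of 0 T' x, OF _ _ intx] \<open>0 < T'\<close> \<open>T' \<le> x\<close>
      unfolding F_def by simp
    ultimately have "F x \<le> A + B * x"
      unfolding A_def by linarith
    then have "mean_density \<kappa> x \<le> 2 / x\<^sup>2 * (A + B * x)"
      unfolding mean_density_def F_def by (intro mult_left_mono) auto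
    also have "\<dots> = 2 * A / x\<^sup>2 + 2 * B / x"
      using \<open>0 < T'\<close> \<open>T' \<le> x\<close> by (simp add: field_simps power2_eq_square)
    finally show ?thesis .
  qed
  have lower: "0 \<le> mean_density \<kappa> x" if "0 < x" for x
  proof -
    have "0 \<le> \<kappa> t * t" if "t \<in> {0..x}" for t
      using that nonneg[of t] by (cases "t = 0") auto
    then have "0 \<le> integral {0..x} (\<lambda>t. \<kappa> t * t)"
      by (rule integral_nonneg[OF int[OF \<open>0 < x\<close>]])
    then show ?thesis
      unfolding mean_density_def by simp
  qed
  show ?thesis
  proof (rule tendsto_sandwich)
    show "eventually (\<lambda>x. 0 \<le> mean_density \<kappa> x) at_top"
      using eventually_gt_at_top[of 0] by (rule eventually_mono) (rule lower)
    show "eventually (\<lambda>x. mean_density \<kappa> x \<le> 2 * A / x\<^sup>2 + 2 * B / x) at_top"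
      using eventually_ge_at_top[of T'] by (rule eventually_mono) (rule upper)
    show "((\<lambda>x::real. 2 * A / x\<^sup>2 + 2 * B / x) \<longlongrightarrow> 0) at_top"
      by real_asymp
  qed simp
qed

lemma mean_density_attains_one:
  assumes lens: "grav_lens \<kappa> C1 C2" and "eventually (\<lambda>t. 1 < \<kappa> t) (at_right 0)"
  shows "\<exists>x>0. mean_density \<kappa> x = 1"
proof -
  obtain a where "0 < a" "1 < \<kappa> a"
    using assms(2) by (auto simp: eventually_at_right_field dest: dense)
  then have "1 < mean_density \<kappa> a"
    using lens unfolding grav_lens_def by force
  moreover have "(mean_density \<kappa> \<longlongrightarrow> 0) at_top"
    using lens unfolding grav_lens_def by (intro mean_density_tendsto_zero) auto
  then obtain N where "\<And>b. N \<le> b \<Longrightarrow> mean_density \<kappa> b < 1"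
    using order_tendstoD(2)[of _ 0 _ 1] by (force simp: eventually_at_top_linorder)
  then obtain b where "a \<le> b" "mean_density \<kappa> b < 1"
    by (meson max.cobounded1 max.cobounded2)
  ultimately obtain x where "a \<le> x" "mean_density \<kappa> x = 1"
    using IVT2'[of "mean_density \<kappa>" b 1 a] continuous_on_mean_density[OF lens \<open>0 < a\<close>]
    by auto
  with \<open>0 < a\<close> show ?thesis
    by (intro exI[of _ x]) auto
qed

theorem theorem1:
  fixes \<kappa> :: "real \<Rightarrow> real" and C1 C2 :: real
  assumes "grav_lens \<kappa> C1 C2"
  shows "(\<exists>xE>0. deflection \<kappa> xE = xE) \<longleftrightarrow> (singular_lens C1 \<or> \<kappa> 0 > 1)"
proof -
  have ring_iff: "deflection \<kappa> x = x \<longleftrightarrow> mean_density \<kappa> x = 1" if "0 < x" for x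
    using that by (simp add: deflection_eq_mult_mean_density)
  have centre_singular: "filterlim \<kappa> at_top (at_right 0)" if "singular_lens C1"
    using assms that unfolding grav_lens_def singular_lens_def by auto
  have centre_regular: "(\<kappa> \<longlongrightarrow> \<kappa> 0) (at_right 0)" if "\<not> singular_lens C1"
    using assms that unfolding grav_lens_def singular_lens_def continuous_within by auto
  show ?thesis
  proof
    assume "\<exists>xE>0. deflection \<kappa> xE = xE"
    then obtain xE where "0 < xE" "mean_density \<kappa> xE = 1"
      using ring_iff by blast
    then show "singular_lens C1 \<or> \<kappa> 0 > 1"
      using mean_density_less_limit_at_centre[OF assms centre_regular] by force
  next
    assume "singular_lens C1 \<or> \<kappa> 0 > 1"
    then have "eventually (\<lambda>t. 1 < \<kappa> t) (at_right 0)"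
      using centre_singular centre_regular
      by (auto simp: filterlim_at_top_dense intro: order_tendstoD(1))
    then show "\<exists>xE>0. deflection \<kappa> xE = xE"
      using mean_density_attains_one[OF assms] ring_iff by auto
  qed
qed

end
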